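(* For fixed positive integers $m$ and $s$ there exist positive constants $c=c(m,s)$ and $C=C(m,s)$, independent of $n$, such that for all sufficiently large $n$, $$c\,n\le r_{\Delta}(K_{m,n};s)\le br_{\Delta}(K_{m,n};s)\le C\,n.$$
   Context: For graphs $H$ and $G$ and a positive integer $s$, write $H\xrightarrow{s} G$ if every coloring of the edges of $H$ with $s$ colors contains a monochromatic subgraph isomorphic to $G$. The degree Ramsey number is $r_{\Delta}(G;s)=\min\{\Delta(H): H\xrightarrow{s} G\}$ and the degree bipartite Ramsey number is $br_{\Delta}(G;s)=\min\{\Delta(H): H \text{ is bipartite and } H\xrightarrow{s} G\}$, where $\Delta(H)$ denotes the maximum degree of $H$. $K_{m,n}$ is the complete bipartite graph with parts of sizes $m$ and $n$. *)

theory Defs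
  imports Complex_Main
begin

text \<open>A finite simple graph is represented by its finite set of edges, each edge a
2-element set of vertices. Isolated vertices play no role for degree Ramsey numbers.\<close>

definition graph :: "'a set set \<Rightarrow> bool" where
  "graph E \<longleftrightarrow> finite E \<and> (\<forall>e\<in>E. card e = 2)"

definition verts :: "'a set set \<Rightarrow> 'a set" where
  "verts E = \<Union>E"

definition degree :: "'a set set \<Rightarrow> 'a \<Rightarrow> nat" where
  "degree E v = card {e\<in>E. v \<in> e}"

definition max_degree :: "'a set set \<Rightarrow> nat" where
  "max_degree E = Max (insert 0 (degree E ` verts E))"

definition bipartite :: "'a set set \<Rightarrow> bool" where
  "bipartite E \<longleftrightarrow> (\<exists>A. \<forall>e\<in>E. card (e \<inter> A) = 1)"

definition mono_copy :: "'a set set \<Rightarrow> ('a set \<Rightarrow> nat) \<Rightarrow> 'b set set \<Rightarrow> bool" where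
  "mono_copy H f G \<longleftrightarrow> (\<exists>c \<phi>. inj_on \<phi> (verts G) \<and>
      (\<forall>e\<in>G. \<phi> ` e \<in> H \<and> f (\<phi> ` e) = c))"

definition arrows :: "'a set set \<Rightarrow> nat \<Rightarrow> 'b set set \<Rightarrow> bool" where
  "arrows H s G \<longleftrightarrow> (\<forall>f. (\<forall>e\<in>H. f e < s) \<longrightarrow> mono_copy H f G)"

text \<open>Host graphs H range over all finite graphs; every finite graph is isomorphic to one
on natural-number vertices.\<close>
definition degree_ramsey :: "'b set set \<Rightarrow> nat \<Rightarrow> nat" where
  "degree_ramsey G s = (LEAST d. \<exists>H :: nat set set. graph H \<and> arrows H s G \<and> max_degree H = d)"

definition degree_bip_ramsey :: "'b set set \<Rightarrow> nat \<Rightarrow> nat" where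
  "degree_bip_ramsey G s =
     (LEAST d. \<exists>H :: nat set set. graph H \<and> bipartite H \<and> arrows H s G \<and> max_degree H = d)"

definition K_bip :: "nat \<Rightarrow> nat \<Rightarrow> nat set set" where
  "K_bip m n = {{i, m + j} | i j. i < m \<and> j < n}"

end

theory Submission
  imports Defs "HOL-Library.FuncSet"
begin

text \<open>Lower bound: colouring every edge of a host graph H with one colour, H must contain a
copy of K_{m,n}, hence a vertex of degree at least n. Upper bound: the bipartite host
K_{sm, n s^{sm}} arrows K_{m,n}. Each right vertex j has a colour vector
(f {i, j})_{i < sm} with at most s^{sm} possible values, so by pigeonhole n right vertices
share one vector h; among the sm entries of h some colour occurs m times, giving a
monochromatic K_{m,n}. Its maximum degree is at most sm + n s^{sm} = O(n).\<close>

lemma graph_finite_verts: "graph H \<Longrightarrow> finite (verts H)"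
  unfolding graph_def verts_def by (metis card.infinite finite_Union zero_neq_numeral)

lemma degree_le_max_degree:
  assumes "graph H"
  shows "degree H v \<le> max_degree H"
proof (cases "v \<in> verts H")
  case True
  then show ?thesis
    unfolding max_degree_def using graph_finite_verts[OF assms] by (intro Max_ge) auto
next
  case False
  then have "{e \<in> H. v \<in> e} = {}" unfolding verts_def by blast
  then have "degree H v = 0" unfolding degree_def by (simp only: card.empty)
  then show ?thesis by simp
qed

lemma max_degree_le:
  assumes "graph H" and "\<And>v. v \<in> verts H \<Longrightarrow> degree H v \<le> d"
  shows "max_degree H \<le> d"
  unfolding max_degree_def using graph_finite_verts[OF assms(1)] assms(2)
  by (intro Max.boundedI) auto

lemma mono_copy_degree_le:
  assumes "graph H" and "mono_copy H f G"
  shows "degree G v \<le> max_degree H"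
proof -
  obtain c \<phi> where inj: "inj_on \<phi> (verts G)" and edges: "\<forall>e\<in>G. \<phi> ` e \<in> H"
    using assms(2) unfolding mono_copy_def by blast
  have "inj_on ((`) \<phi>) {e \<in> G. v \<in> e}"
    by (rule inj_on_image, rule inj_on_subset[OF inj]) (auto simp: verts_def)
  then have "degree G v = card ((`) \<phi> ` {e \<in> G. v \<in> e})"
    unfolding degree_def by (simp add: card_image)
  also have "\<dots> \<le> degree H (\<phi> v)"
    unfolding degree_def using assms(1) edges
    by (intro card_mono) (auto simp: graph_def)
  also have "\<dots> \<le> max_degree H"
    by (rule degree_le_max_degree[OF assms(1)])
  finally show ?thesis .
qed

lemma arrows_degree_le:
  assumes "s > 0" and "graph H" and "arrows H s G"
  shows "degree G v \<le> max_degree H"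
proof -
  have "mono_copy H (\<lambda>_. 0) G"
    using assms(1,3) unfolding arrows_def by simp
  then show ?thesis by (rule mono_copy_degree_le[OF assms(2)])
qed

lemma degree_bip_ramsey_le:
  fixes H :: "nat set set"
  assumes "graph H" and "bipartite H" and "arrows H s G"
  shows "degree_bip_ramsey G s \<le> max_degree H"
  unfolding degree_bip_ramsey_def using assms by (intro Least_le) blast

lemma degree_ramsey_le_degree_bip_ramsey:
  fixes H :: "nat set set"
  assumes "graph H" and "bipartite H" and "arrows H s G"
  shows "degree_ramsey G s \<le> degree_bip_ramsey G s"
proof -
  let ?P = "\<lambda>d. \<exists>H :: nat set set. graph H \<and> bipartite H \<and> arrows H s G \<and> max_degree H = d"
  have "\<exists>d. ?P d" using assms by blast
  then have "?P (Least ?P)" by (rule LeastI_ex)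
  then show ?thesis
    unfolding degree_ramsey_def degree_bip_ramsey_def by (intro Least_le) blast
qed

lemma degree_le_degree_ramsey:
  fixes H :: "nat set set"
  assumes "s > 0" and "graph H" and "arrows H s G"
  shows "degree G v \<le> degree_ramsey G s"
proof -
  let ?P = "\<lambda>d. \<exists>H :: nat set set. graph H \<and> arrows H s G \<and> max_degree H = d"
  have "\<exists>d. ?P d" using assms by blast
  then have "?P (Least ?P)" by (rule LeastI_ex)
  then obtain H' :: "nat set set" where H': "graph H'" "arrows H' s G" "max_degree H' = Least ?P"
    by blast
  have "degree G v \<le> max_degree H'" by (rule arrows_degree_le[OF assms(1) H'(1,2)])
  then show ?thesis unfolding degree_ramsey_def H'(3) .
qed

lemma K_bip_graph: "graph (K_bip a b)"
proof -
  have "K_bip a b = (\<lambda>(i, j). {i, a + j}) ` ({..<a} \<times> {..<b})"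
    unfolding K_bip_def by auto
  then show ?thesis unfolding graph_def by (auto simp: K_bip_def)
qed

lemma K_bip_bipartite: "bipartite (K_bip a b)"
  unfolding bipartite_def
proof (intro exI[of _ "{..<a}"] ballI)
  fix e assume "e \<in> K_bip a b"
  then obtain i j where "e = {i, a + j}" "i < a" by (auto simp: K_bip_def)
  then have "e \<inter> {..<a} = {i}" by auto
  then show "card (e \<inter> {..<a}) = 1" by simp
qed

lemma verts_K_bip_subset: "verts (K_bip a b) \<subseteq> {..<a + b}"
  unfolding verts_def K_bip_def by auto

lemma degree_K_bip_left:
  assumes "i < a"
  shows "degree (K_bip a b) i = b"
proof -
  have "{e \<in> K_bip a b. i \<in> e} = (\<lambda>j. {i, a + j}) ` {..<b}"
    using assms unfolding K_bip_def by auto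
  moreover have "inj_on (\<lambda>j. {i, a + j}) {..<b}"
    using assms by (auto intro!: inj_onI simp: doubleton_eq_iff)
  ultimately show ?thesis unfolding degree_def by (simp add: card_image)
qed

lemma degree_K_bip_le: "degree (K_bip a b) v \<le> a + b"
proof -
  have "{e \<in> K_bip a b. v \<in> e} \<subseteq> (\<lambda>i. {i, v}) ` {..<a} \<union> (\<lambda>j. {v, a + j}) ` {..<b}"
    by (auto simp: K_bip_def)
  then have "degree (K_bip a b) v \<le> card ((\<lambda>i. {i, v}) ` {..<a} \<union> (\<lambda>j. {v, a + j}) ` {..<b})"
    unfolding degree_def by (intro card_mono) auto
  also have "\<dots> \<le> card ((\<lambda>i. {i, v}) ` {..<a}) + card ((\<lambda>j. {v, a + j}) ` {..<b})"
    by (rule card_Un_le)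
  also have "\<dots> \<le> a + b"
    using card_image_le[of "{..<a}" "\<lambda>i. {i, v}"] card_image_le[of "{..<b}" "\<lambda>j. {v, a + j}"]
    by simp
  finally show ?thesis .
qed

lemma max_degree_K_bip_le: "max_degree (K_bip a b) \<le> a + b"
  by (rule max_degree_le[OF K_bip_graph degree_K_bip_le])

lemma mono_copy_K_bip_block:
  assumes I: "I \<subseteq> {..<a}" "card I = m" and J: "J \<subseteq> {..<b}" "card J = n"
    and mono: "\<And>i j. i \<in> I \<Longrightarrow> j \<in> J \<Longrightarrow> f {i, a + j} = c"
  shows "mono_copy (K_bip a b) f (K_bip m n)"
proof -
  obtain \<alpha> where \<alpha>: "bij_betw \<alpha> {..<m} I"
    using finite_same_card_bij[of "{..<m}" I] I finite_subset by fastforce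
  obtain \<beta> where \<beta>: "bij_betw \<beta> {..<n} J"
    using finite_same_card_bij[of "{..<n}" J] J finite_subset by fastforce
  define \<phi> where "\<phi> x = (if x < m then \<alpha> x else a + \<beta> (x - m))" for x
  have \<alpha>I: "\<alpha> x \<in> I" if "x < m" for x using \<alpha> that by (auto simp: bij_betw_def)
  have \<beta>J: "\<beta> x \<in> J" if "x < n" for x using \<beta> that by (auto simp: bij_betw_def)
  have \<alpha>_less: "\<alpha> x < a" if "x < m" for x using \<alpha>I[OF that] I by auto
  have "inj_on \<phi> {..<m + n}"
  proof (rule inj_onI)
    fix x y assume xy: "x \<in> {..<m + n}" "y \<in> {..<m + n}" "\<phi> x = \<phi> y"
    show "x = y"
    proof (cases "x < m"; cases "y < m")
      assume "\<not> x < m" "\<not> y < m"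
      then have "\<beta> (x - m) = \<beta> (y - m)" using xy unfolding \<phi>_def by auto
      moreover have "x - m \<in> {..<n}" "y - m \<in> {..<n}" using xy \<open>\<not> x < m\<close> \<open>\<not> y < m\<close> by auto
      ultimately show ?thesis
        using \<beta> \<open>\<not> x < m\<close> \<open>\<not> y < m\<close> unfolding bij_betw_def inj_on_def by fastforce
    qed (use xy \<alpha> in \<open>auto simp: \<phi>_def bij_betw_def inj_on_def dest: \<alpha>_less\<close>)
  qed
  then have "inj_on \<phi> (verts (K_bip m n))"
    using verts_K_bip_subset inj_on_subset by blast
  moreover have "\<phi> ` e \<in> K_bip a b \<and> f (\<phi> ` e) = c" if "e \<in> K_bip m n" for e
  proof -
    obtain i j where e: "e = {i, m + j}" "i < m" "j < n"
      using \<open>e \<in> K_bip m n\<close> unfolding K_bip_def by blast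
    then have "\<phi> ` e = {\<alpha> i, a + \<beta> j}" unfolding \<phi>_def by auto
    moreover have "\<alpha> i < a" "\<beta> j < b"
      using \<alpha>_less[OF e(2)] \<beta>J[OF e(3)] J(1) by auto
    ultimately show ?thesis
      using mono[OF \<alpha>I[OF e(2)] \<beta>J[OF e(3)]] unfolding K_bip_def by auto
  qed
  ultimately show ?thesis unfolding mono_copy_def by blast
qed

lemma pigeonhole_subset:
  assumes "g \<in> A \<rightarrow> B" and "finite A" and "finite B" and "B \<noteq> {}"
    and "card B * k \<le> card A"
  shows "\<exists>y\<in>B. \<exists>Y\<subseteq>A. card Y = k \<and> (\<forall>x\<in>Y. g x = y)"
proof -
  obtain y where y: "y \<in> B" and fibre: "card A \<le> card (g -` {y} \<inter> A) * card B"
    using pigeonhole_card[OF assms(1-4)] by blast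
  have "card B * k \<le> card B * card (g -` {y} \<inter> A)"
    using assms(5) fibre by (metis le_trans mult.commute)
  moreover have "0 < card B"
    using assms(3,4) by (simp add: card_gt_0_iff)
  ultimately have "k \<le> card (g -` {y} \<inter> A)"
    by simp
  then obtain Y where "Y \<subseteq> g -` {y} \<inter> A" "card Y = k"
    by (rule obtain_subset_with_card_n)
  then show ?thesis using y by blast
qed

lemma K_bip_arrows_K_bip:
  assumes "s > 0"
  shows "arrows (K_bip (s * m) (n * s ^ (s * m))) s (K_bip m n)"
  unfolding arrows_def
proof (intro allI impI)
  define a b where "a = s * m" and "b = n * s ^ a"
  fix f :: "nat set \<Rightarrow> nat"
  assume "\<forall>e\<in>K_bip (s * m) (n * s ^ (s * m)). f e < s"
  then have colours: "f {i, a + j} < s" if "i < a" "j < b" for i j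
    using that unfolding a_def b_def K_bip_def by blast
  define T where "T = ({..<a} \<rightarrow>\<^sub>E {..<s})"
  define g where "g j = restrict (\<lambda>i. f {i, a + j}) {..<a}" for j
  have "g \<in> {..<b} \<rightarrow> T" unfolding T_def g_def using colours by auto
  moreover have "card T * n = card {..<b}" "T \<noteq> {}"
    unfolding T_def a_def b_def using assms by (auto simp: card_PiE PiE_eq_empty_iff)
  ultimately obtain h J where h: "h \<in> T" and J: "J \<subseteq> {..<b}" "card J = n"
    and gJ: "\<forall>j\<in>J. g j = h"
    using pigeonhole_subset[of g "{..<b}" T n] unfolding T_def by (auto simp: finite_PiE)
  have "h \<in> {..<a} \<rightarrow> {..<s}" using h unfolding T_def by auto
  moreover have "card {..<s} * m = card {..<a}" "{..<s} \<noteq> {}"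
    unfolding a_def using assms by auto
  ultimately obtain c I where I: "I \<subseteq> {..<a}" "card I = m" and hI: "\<forall>i\<in>I. h i = c"
    using pigeonhole_subset[of h "{..<a}" "{..<s}" m] by auto
  have "f {i, a + j} = c" if "i \<in> I" "j \<in> J" for i j
    using gJ hI I that unfolding g_def by (metis restrict_apply' subsetD lessThan_iff)
  then show "mono_copy (K_bip (s * m) (n * s ^ (s * m))) f (K_bip m n)"
    using mono_copy_K_bip_block[OF I J] unfolding a_def b_def by blast
qed

theorem theorem3:
  fixes m s :: nat
  assumes "m > 0" and "s > 0"
  shows "\<exists>c C :: real. c > 0 \<and> C > 0 \<and> (\<exists>N. \<forall>n\<ge>N.
           c * real n \<le> real (degree_ramsey (K_bip m n) s) \<and>
           degree_ramsey (K_bip m n) s \<le> degree_bip_ramsey (K_bip m n) s \<and>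
           real (degree_bip_ramsey (K_bip m n) s) \<le> C * real n)"
proof (rule exI[of _ 1], rule exI[of _ "real (s * m + s ^ (s * m))"], intro conjI exI[of _ 1] allI impI)
  show "(0::real) < 1" by simp
  show "(0::real) < real (s * m + s ^ (s * m))" using assms by (auto intro!: add_pos_pos)
  fix n :: nat assume "1 \<le> n"
  define H where "H = K_bip (s * m) (n * s ^ (s * m))"
  have host: "graph H" "bipartite H" "arrows H s (K_bip m n)"
    unfolding H_def using K_bip_graph K_bip_bipartite K_bip_arrows_K_bip[OF assms(2)] by auto
  have "n = degree (K_bip m n) 0" using assms(1) by (simp add: degree_K_bip_left)
  also have "\<dots> \<le> degree_ramsey (K_bip m n) s"
    using degree_le_degree_ramsey[OF assms(2) host(1,3)] .
  finally show "1 * real n \<le> real (degree_ramsey (K_bip m n) s)" by simp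
  show "degree_ramsey (K_bip m n) s \<le> degree_bip_ramsey (K_bip m n) s"
    by (rule degree_ramsey_le_degree_bip_ramsey[OF host])
  have "degree_bip_ramsey (K_bip m n) s \<le> max_degree H"
    by (rule degree_bip_ramsey_le[OF host])
  also have "\<dots> \<le> s * m + n * s ^ (s * m)"
    unfolding H_def by (rule max_degree_K_bip_le)
  also have "\<dots> \<le> (s * m + s ^ (s * m)) * n" using \<open>1 \<le> n\<close> by (simp add: algebra_simps)
  finally show "real (degree_bip_ramsey (K_bip m n) s) \<le> real (s * m + s ^ (s * m)) * real n"
    by (metis of_nat_le_iff of_nat_mult)
qed

end
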